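(* For all $t_1, t_2 \in \mathcal{L}_r$, $t_1 =_{\mathcal{L}} t_2$ if and only if $t_1 = t_2$ (i.e. they have the same set of sublevels).
   Context: $\mathcal{X}$ is a countable set of variables; a valuation is $\sigma\colon\mathcal{X}\to\mathbb{N}$. For finite $E\subseteq\mathcal{X}$, $x\in\mathcal{X}$, $S\in\mathbb{N}$, the sublevels $A(E,x,S)$ and $B(E,S)$ have values $[A(E,x,S)]_\sigma = 0$ if some $y\in E$ has $\sigma(y)=0$, and $\sigma(x)+S$ otherwise; $[B(E,S)]_\sigma=0$ if some $y\in E$ has $\sigma(y)=0$, and $S$ otherwise. $\mathcal{L}_s$ is the set of sublevels $A(E,x,S)$ with $x\in E$ and $B(E,S)$ with $S>0$. $t_1\leqslant_{\mathcal{L}} t_2$ (resp. $t_1 =_{\mathcal{L}} t_2$) means $[t_1]_\sigma\le[t_2]_\sigma$ (resp. $=$) for every valuation $\sigma$; $\max$ of a finite family is evaluated pointwise (empty max has value $0$). Two sublevels $u,v$ are incomparable if neither $u\leqslant_{\mathcal{L}} v$ nor $v\leqslant_{\mathcal{L}} u$. A minimal representation is a formal expression $\max(u_1,\ldots,u_n)$ where $\{u_1,\ldots,u_n\}$ is a finite set of pairwise incomparable elements of $\mathcal{L}_s$; $\mathcal{L}_r$ is the set of minimal representations. *)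

theory Defs
  imports Main "HOL-Library.Countable"
begin

datatype 'x sublevel = A "'x set" 'x nat | B "'x set" nat

fun sval :: "'x sublevel \<Rightarrow> ('x \<Rightarrow> nat) \<Rightarrow> nat" where
  "sval (A E x S) \<sigma> = (if \<exists>y\<in>E. \<sigma> y = 0 then 0 else \<sigma> x + S)"
| "sval (B E S) \<sigma> = (if \<exists>y\<in>E. \<sigma> y = 0 then 0 else S)"

definition sub_le :: "'x sublevel \<Rightarrow> 'x sublevel \<Rightarrow> bool" where
  "sub_le u v \<longleftrightarrow> (\<forall>\<sigma>. sval u \<sigma> \<le> sval v \<sigma>)"

definition incomparable :: "'x sublevel \<Rightarrow> 'x sublevel \<Rightarrow> bool" where
  "incomparable u v \<longleftrightarrow> \<not> sub_le u v \<and> \<not> sub_le v u"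

fun in_Ls :: "'x sublevel \<Rightarrow> bool" where
  "in_Ls (A E x S) \<longleftrightarrow> finite E \<and> x \<in> E"
| "in_Ls (B E S) \<longleftrightarrow> finite E \<and> S > 0"

text \<open>A minimal representation max(u_1,...,u_n) is identified with its finite set of sublevels.\<close>
definition in_Lr :: "'x sublevel set \<Rightarrow> bool" where
  "in_Lr T \<longleftrightarrow> finite T \<and> (\<forall>u\<in>T. in_Ls u) \<and>
     (\<forall>u\<in>T. \<forall>v\<in>T. u \<noteq> v \<longrightarrow> incomparable u v)"

definition rval :: "'x sublevel set \<Rightarrow> ('x \<Rightarrow> nat) \<Rightarrow> nat" where
  "rval T \<sigma> = Max (insert 0 ((\<lambda>u. sval u \<sigma>) ` T))"

definition rep_eq :: "'x sublevel set \<Rightarrow> 'x sublevel set \<Rightarrow> bool" where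
  "rep_eq T1 T2 \<longleftrightarrow> (\<forall>\<sigma>. rval T1 \<sigma> = rval T2 \<sigma>)"

end

theory Submission
  imports Defs
begin

text \<open>On \<open>\<L>\<^sub>s\<close> the order \<open>\<le>\<^sub>\<L>\<close> is determined syntactically by the
  parameters of the sublevels, hence antisymmetric. Moreover a sublevel \<open>u \<in> \<L>\<^sub>s\<close> lies
  below a finite max only if it lies below one of its terms: a single test valuation isolates \<open>u\<close>
  (for \<open>A(E,x,S)\<close> one puts a value at \<open>x\<close> exceeding all constants of the family). So if two
  minimal representations agree, every term \<open>u\<close> of the first lies below a term \<open>v\<close> of the
  second, which lies below a term \<open>u'\<close> of the first; incomparability gives \<open>u = u'\<close>, and
  antisymmetry \<open>u = v\<close>.\<close>

fun vars :: "'x sublevel \<Rightarrow> 'x set" where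
  "vars (A E x S) = E"
| "vars (B E S) = E"

lemma sval_eq_0_if_vars: "y \<in> vars v \<Longrightarrow> \<sigma> y = 0 \<Longrightarrow> sval v \<sigma> = 0"
  by (cases v) auto

lemma sub_leD: "sub_le u v \<Longrightarrow> sval u \<sigma> \<le> sval v \<sigma>"
  unfolding sub_le_def by blast

lemma sub_le_trans: "sub_le u v \<Longrightarrow> sub_le v w \<Longrightarrow> sub_le u w"
  unfolding sub_le_def using le_trans by blast

lemma vars_subset_if_sub_le:
  assumes "sub_le u v" and "0 < sval u (\<lambda>z. of_bool (z \<in> vars u))"
  shows "vars v \<subseteq> vars u"
proof
  fix y assume "y \<in> vars v"
  have "0 < sval v (\<lambda>z. of_bool (z \<in> vars u))"
    using assms(2) sub_leD[OF assms(1)] by (rule order.strict_trans2)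
  moreover have "sval v (\<lambda>z. of_bool (z \<in> vars u)) = 0" if "y \<notin> vars u"
    using sval_eq_0_if_vars[OF \<open>y \<in> vars v\<close>] that by simp
  ultimately show "y \<in> vars u" by auto
qed

lemma sub_le_A_A_iff:
  assumes "x \<in> E"
  shows "sub_le (A E x S) (A E' x' S') \<longleftrightarrow> E' \<subseteq> E \<and> x' = x \<and> S \<le> S'"
proof
  assume le: "sub_le (A E x S) (A E' x' S')"
  have "E' \<subseteq> E" using vars_subset_if_sub_le[OF le] assms by simp
  moreover have "x' = x"
  proof (rule ccontr)
    assume "x' \<noteq> x"
    then show False
      using sub_leD[OF le, of "\<lambda>z. if z = x then S' + 2 else 1"] assms
      by (auto split: if_splits)
  qed
  moreover have "S \<le> S'" using sub_leD[OF le, of "\<lambda>_. 1"] by simp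
  ultimately show "E' \<subseteq> E \<and> x' = x \<and> S \<le> S'" by blast
qed (auto 0 3 simp: sub_le_def)

lemma not_sub_le_A_B: "x \<in> E \<Longrightarrow> \<not> sub_le (A E x S) (B E' S')"
  using sub_leD[of "A E x S" "B E' S'" "\<lambda>_. S' + 1"] by auto

lemma sub_le_B_A_iff:
  assumes "0 < S"
  shows "sub_le (B E S) (A E' x' S') \<longleftrightarrow> E' \<subseteq> E \<and> S \<le> of_bool (x' \<in> E) + S'"
proof
  assume le: "sub_le (B E S) (A E' x' S')"
  have "E' \<subseteq> E" using vars_subset_if_sub_le[OF le] assms by simp
  moreover have "S \<le> of_bool (x' \<in> E) + S'"
    using sub_leD[OF le, of "\<lambda>z. of_bool (z \<in> E)"] \<open>E' \<subseteq> E\<close> assms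
    by (auto split: if_splits)
  ultimately show "E' \<subseteq> E \<and> S \<le> of_bool (x' \<in> E) + S'" by blast
next
  assume "E' \<subseteq> E \<and> S \<le> of_bool (x' \<in> E) + S'"
  then show "sub_le (B E S) (A E' x' S')"
    unfolding sub_le_def by (auto 0 3 simp: of_bool_def split: if_splits)
qed

lemma sub_le_B_B_iff:
  assumes "0 < S"
  shows "sub_le (B E S) (B E' S') \<longleftrightarrow> E' \<subseteq> E \<and> S \<le> S'"
proof
  assume le: "sub_le (B E S) (B E' S')"
  have "E' \<subseteq> E" using vars_subset_if_sub_le[OF le] assms by simp
  moreover have "S \<le> S'" using sub_leD[OF le, of "\<lambda>_. 1"] by simp
  ultimately show "E' \<subseteq> E \<and> S \<le> S'" by blast
qed (auto 0 3 simp: sub_le_def)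

lemma sub_le_antisym:
  assumes "in_Ls u" and "in_Ls v" and "sub_le u v" and "sub_le v u"
  shows "u = v"
  using assms
  by (cases u; cases v) (auto simp: sub_le_A_A_iff sub_le_B_B_iff dest: not_sub_le_A_B)

lemma sub_le_A_if_test:
  fixes x :: 'x and E :: "'x set" and N :: nat
  defines "\<sigma> \<equiv> \<lambda>z. if z = x then N else if z \<in> E then 1 else 0"
  assumes x: "x \<in> E" and N: "sval v (\<lambda>_. 1) < N" and le: "sval (A E x S) \<sigma> \<le> sval v \<sigma>"
  shows "sub_le (A E x S) v"
proof -
  have "0 < N" using N by simp
  then have "sval (A E x S) \<sigma> = N + S" using x by (simp add: \<sigma>_def)
  then have ge_N: "N + S \<le> sval v \<sigma>" and "0 < sval v \<sigma>" using le \<open>0 < N\<close> by auto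
  show ?thesis
  proof (cases v)
    case (A E' x' S')
    have pos: "\<forall>y\<in>E'. \<sigma> y \<noteq> 0" and ge: "N + S \<le> \<sigma> x' + S'"
      using ge_N \<open>0 < sval v \<sigma>\<close> A by (simp_all split: if_splits)
    have "E' \<subseteq> E" using pos x by (auto simp: \<sigma>_def split: if_splits)
    moreover have "x' = x" using ge N A by (auto simp: \<sigma>_def split: if_splits)
    moreover have "S \<le> S'" using ge \<open>x' = x\<close> by (simp add: \<sigma>_def)
    ultimately show ?thesis using A by (simp add: sub_le_A_A_iff[OF x])
  next
    case (B E' S')
    then show ?thesis using ge_N \<open>0 < sval v \<sigma>\<close> N by (simp split: if_splits)
  qed
qed

lemma sub_le_B_if_test:
  fixes E :: "'x set"
  defines "\<sigma> \<equiv> \<lambda>z. of_bool (z \<in> E)"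
  assumes S: "0 < S" and le: "sval (B E S) \<sigma> \<le> sval v \<sigma>"
  shows "sub_le (B E S) v"
proof (cases v)
  case (A E' x' S')
  then show ?thesis
    using S le by (auto simp: sub_le_B_A_iff \<sigma>_def split: if_splits)
next
  case (B E' S')
  then show ?thesis
    using S le by (auto simp: sub_le_B_B_iff \<sigma>_def split: if_splits)
qed

lemma sval_le_rval: "finite T \<Longrightarrow> u \<in> T \<Longrightarrow> sval u \<sigma> \<le> rval T \<sigma>"
  unfolding rval_def by (intro Max_ge) auto

lemma rval_attained:
  assumes "finite T" and "0 < rval T \<sigma>"
  shows "\<exists>v\<in>T. sval v \<sigma> = rval T \<sigma>"
proof -
  have "rval T \<sigma> \<in> insert 0 ((\<lambda>u. sval u \<sigma>) ` T)"
    unfolding rval_def using assms(1) by (intro Max_in) auto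
  then show ?thesis using assms(2) by auto
qed

lemma ex_sub_le_if_le_rval:
  assumes "in_Ls u" and "finite T" and le: "\<And>\<sigma>. sval u \<sigma> \<le> rval T \<sigma>"
  shows "\<exists>v\<in>T. sub_le u v"
proof -
  have dominated: "\<exists>v\<in>T. sval u \<sigma> \<le> sval v \<sigma>" if "0 < sval u \<sigma>" for \<sigma>
  proof -
    have "0 < rval T \<sigma>" using that le[of \<sigma>] by linarith
    then show ?thesis using rval_attained[OF assms(2)] le[of \<sigma>] by metis
  qed
  show ?thesis
  proof (cases u)
    case (A E x S)
    \<comment> \<open>\<open>sval v (\<lambda>_. 1)\<close> bounds the constant of \<open>v\<close>, so \<open>N\<close> exceeds all constants of \<open>T\<close>\<close>
    define N where "N = Suc (rval T (\<lambda>_. 1))"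
    let ?\<sigma> = "\<lambda>z. if z = x then N else if z \<in> E then 1 else 0"
    have "x \<in> E" using assms(1) A by simp
    then have "0 < sval u ?\<sigma>" using A by (simp add: N_def)
    then obtain v where "v \<in> T" "sval u ?\<sigma> \<le> sval v ?\<sigma>" using dominated by blast
    moreover have "sval v (\<lambda>_. 1) < N"
      unfolding N_def by (rule le_imp_less_Suc[OF sval_le_rval[OF assms(2) \<open>v \<in> T\<close>]])
    ultimately show ?thesis using sub_le_A_if_test[OF \<open>x \<in> E\<close>] A by blast
  next
    case (B E S)
    let ?\<sigma> = "\<lambda>z. of_bool (z \<in> E) :: nat"
    have "0 < S" using assms(1) B by simp
    then have "0 < sval u ?\<sigma>" using B by simp
    then obtain v where "v \<in> T" "sval u ?\<sigma> \<le> sval v ?\<sigma>" using dominated by blast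
    then show ?thesis using sub_le_B_if_test[OF \<open>0 < S\<close>] B by blast
  qed
qed

lemma subset_if_rep_eq:
  assumes t1: "in_Lr t1" and t2: "in_Lr t2" and eq: "rep_eq t1 t2"
  shows "t1 \<subseteq> t2"
proof
  fix u assume "u \<in> t1"
  have finite: "finite t1" "finite t2" and Ls: "in_Ls u"
    using t1 t2 \<open>u \<in> t1\<close> by (auto simp: in_Lr_def)
  obtain v where "v \<in> t2" "sub_le u v"
    using ex_sub_le_if_le_rval[OF Ls finite(2)] sval_le_rval[OF finite(1) \<open>u \<in> t1\<close>] eq
    by (metis rep_eq_def)
  moreover have "in_Ls v" using t2 \<open>v \<in> t2\<close> by (auto simp: in_Lr_def)
  moreover obtain u' where "u' \<in> t1" "sub_le v u'"
    using ex_sub_le_if_le_rval[OF \<open>in_Ls v\<close> finite(1)] sval_le_rval[OF finite(2) \<open>v \<in> t2\<close>] eq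
    by (metis rep_eq_def)
  ultimately have "u' = u"
    using t1 \<open>u \<in> t1\<close> sub_le_trans unfolding in_Lr_def incomparable_def by metis
  then show "u \<in> t2"
    using sub_le_antisym[OF Ls \<open>in_Ls v\<close> \<open>sub_le u v\<close>] \<open>sub_le v u'\<close> \<open>v \<in> t2\<close> by simp
qed

theorem proposition33:
  fixes t1 t2 :: "('x::countable) sublevel set"
  assumes "in_Lr t1" and "in_Lr t2"
  shows "rep_eq t1 t2 \<longleftrightarrow> t1 = t2"
proof
  assume eq: "rep_eq t1 t2"
  then have "rep_eq t2 t1" by (simp add: rep_eq_def)
  then show "t1 = t2"
    using subset_if_rep_eq[OF assms eq] subset_if_rep_eq[OF assms(2,1)] by blast
qed (simp add: rep_eq_def)

end
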